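(* Let $b,d>0$ and $c\in\mathbb{R}$, and define $P_5:\mathbb{R}^{3\times3}\to\mathbb{R}$ by $P_5(R)=\sqrt{(\|R^TR-I\|_F+c)^2+b}$. On the open set $U=\{R:\|R^TR-I\|_F>d\}$, $P_5$ is twice differentiable with locally Lipschitz second derivatives, and there is a constant $L$ such that $-LI\preceq\nabla^2P_5(R)\preceq LI$ for all $R\in U$.
   Context: $\|\cdot\|_F$ is the Frobenius norm; $R$ is identified with a vector in $\mathbb{R}^9$. *)

theory Defs
  imports "HOL-Analysis.Analysis"
begin

text \<open>R in R^{3x3} is the type real^3^3; its norm is the Frobenius norm
  (Euclidean norm of R viewed as a vector in R^9).\<close>

definition P5 :: "real \<Rightarrow> real \<Rightarrow> real^3^3 \<Rightarrow> real" where
  "P5 b c R = sqrt ((norm (transpose R ** R - mat 1) + c)^2 + b)"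

definition U_set :: "real \<Rightarrow> (real^3^3) set" where
  "U_set d = {R. norm (transpose R ** R - mat 1) > d}"

end

theory Submission
  imports Defs
begin

(* P5 = s o N with N R = ||G R||, G R = R^T R - I and s t = sqrt ((t + c)^2 + b). On U we have
   N R > d > 0, so N is smooth there, and the chain rule gives
     D P5 (R) W = phi (N R) * <G R, R^T W + W^T R>,   phi t = s' t / t.
   Differentiating once more expresses the Hessian through bounded (bi)linear operations on
   R and G R, with the scalar coefficients phi (N R) and phi' (N R) / N R; all of these are
   locally Lipschitz on U, hence so is the Hessian.  For the uniform bound,
   |phi t| <= 1/t and t^2 |phi' t| <= 1 + 2|c|/sqrt b, while
   ||R||^2 = <R^T R, I> <= ||I|| (N R + ||I||) grows only linearly in N R, so the factors
   1/N R absorb all growth in R. *)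

definition locally_lipschitz_on :: "'a::metric_space set \<Rightarrow> ('a \<Rightarrow> 'b::metric_space) \<Rightarrow> bool" where
  "locally_lipschitz_on S f \<longleftrightarrow> (\<forall>x\<in>S. \<exists>e>0. \<exists>K. K-lipschitz_on (ball x e \<inter> S) f)"

lemma lipschitz_on_imp_locally_lipschitz_on:
  assumes "K-lipschitz_on S f"
  shows "locally_lipschitz_on S f"
  unfolding locally_lipschitz_on_def
proof
  fix x
  have "K-lipschitz_on (ball x 1 \<inter> S) f" using assms by (rule lipschitz_on_subset) simp
  then show "\<exists>e>0. \<exists>K. K-lipschitz_on (ball x e \<inter> S) f" using zero_less_one by blast
qed

lemma locally_lipschitz_on_const: "locally_lipschitz_on S (\<lambda>x. c)"
  by (rule lipschitz_on_imp_locally_lipschitz_on[OF lipschitz_on_constant])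

lemma locally_lipschitz_on_ident: "locally_lipschitz_on S (\<lambda>x. x)"
  by (rule lipschitz_on_imp_locally_lipschitz_on[OF lipschitz_on_id])

lemma locally_lipschitz_on_compose:
  assumes g: "locally_lipschitz_on T g" and f: "locally_lipschitz_on S f" and fST: "f ` S \<subseteq> T"
  shows "locally_lipschitz_on S (\<lambda>x. g (f x))"
  unfolding locally_lipschitz_on_def
proof
  fix x assume x: "x \<in> S"
  obtain e1 K1 where e1: "e1 > 0" and f_lip: "K1-lipschitz_on (ball x e1 \<inter> S) f"
    using f x unfolding locally_lipschitz_on_def by blast
  obtain e2 K2 where e2: "e2 > 0" and g_lip: "K2-lipschitz_on (ball (f x) e2 \<inter> T) g"
    using g x fST unfolding locally_lipschitz_on_def by blast
  have K1: "K1 \<ge> 0" using lipschitz_on_nonneg f_lip by blast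
  define e where "e = min e1 (e2 / (K1 + 1))"
  have e: "e > 0" using e1 e2 K1 by (simp add: e_def)
  have f_lip': "K1-lipschitz_on (ball x e \<inter> S) f"
    by (rule lipschitz_on_subset[OF f_lip]) (auto simp: e_def)
  have "f y \<in> ball (f x) e2" if y: "y \<in> ball x e \<inter> S" for y
  proof -
    have "dist (f x) (f y) \<le> K1 * dist x y"
      using lipschitz_onD[OF f_lip'] x y e by simp
    also have "\<dots> \<le> K1 * (e2 / (K1 + 1))"
      using y K1 by (intro mult_left_mono) (auto simp: e_def)
    also have "\<dots> < e2" using K1 e2 by (simp add: field_simps)
    finally show ?thesis by simp
  qed
  then have "f ` (ball x e \<inter> S) \<subseteq> ball (f x) e2 \<inter> T" using fST by auto
  then have "(K2 * K1)-lipschitz_on (ball x e \<inter> S) (\<lambda>x. g (f x))"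
    by (intro lipschitz_on_compose2[OF f_lip'] lipschitz_on_subset[OF g_lip])
  with e show "\<exists>e>0. \<exists>K. K-lipschitz_on (ball x e \<inter> S) (\<lambda>x. g (f x))" by blast
qed

lemma locally_lipschitz_on_compose_lipschitz:
  "K-lipschitz_on T g \<Longrightarrow> locally_lipschitz_on S f \<Longrightarrow> (\<And>x. x \<in> S \<Longrightarrow> f x \<in> T) \<Longrightarrow>
    locally_lipschitz_on S (\<lambda>x. g (f x))"
  by (rule locally_lipschitz_on_compose) (auto intro: lipschitz_on_imp_locally_lipschitz_on)

lemma locally_lipschitz_on_Pair:
  assumes f: "locally_lipschitz_on S f" and g: "locally_lipschitz_on S g"
  shows "locally_lipschitz_on S (\<lambda>x. (f x, g x))"
  unfolding locally_lipschitz_on_def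
proof
  fix x assume x: "x \<in> S"
  obtain e1 K1 where e1: "e1 > 0" and f_lip: "K1-lipschitz_on (ball x e1 \<inter> S) f"
    using f x unfolding locally_lipschitz_on_def by blast
  obtain e2 K2 where e2: "e2 > 0" and g_lip: "K2-lipschitz_on (ball x e2 \<inter> S) g"
    using g x unfolding locally_lipschitz_on_def by blast
  have "(sqrt (K1\<^sup>2 + K2\<^sup>2))-lipschitz_on (ball x (min e1 e2) \<inter> S) (\<lambda>x. (f x, g x))"
    by (intro lipschitz_on_Pair lipschitz_on_subset[OF f_lip] lipschitz_on_subset[OF g_lip]) auto
  moreover have "min e1 e2 > 0" using e1 e2 by simp
  ultimately show "\<exists>e>0. \<exists>K. K-lipschitz_on (ball x e \<inter> S) (\<lambda>x. (f x, g x))" by blast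
qed

lemma locally_lipschitz_on_bounded_linear:
  fixes f :: "'a::metric_space \<Rightarrow> 'b::real_normed_vector"
  assumes "bounded_linear h" and "locally_lipschitz_on S f"
  shows "locally_lipschitz_on S (\<lambda>x. h (f x))"
proof -
  obtain K where "K-lipschitz_on UNIV h"
    using bounded_linear.lipschitz_boundE[OF assms(1)] by blast
  then show ?thesis using assms(2) by (rule locally_lipschitz_on_compose_lipschitz) simp
qed

lemma bounded_bilinear_imp_locally_lipschitz_on:
  assumes "bounded_bilinear bil"
  shows "locally_lipschitz_on UNIV (\<lambda>p. bil (fst p) (snd p))"
  unfolding locally_lipschitz_on_def
proof
  fix p :: "'a::real_normed_vector \<times> 'b::real_normed_vector"
  obtain K where K: "K > 0" "\<And>a b. norm (bil a b) \<le> norm a * norm b * K"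
    using bounded_bilinear.pos_bounded[OF assms] by blast
  define A where "A = norm (fst p) + 1"
  define B where "B = norm (snd p) + 1"
  have bounds: "norm (fst q) \<le> A" "norm (snd q) \<le> B" if "q \<in> ball p 1" for q
  proof -
    have "dist (fst q) (fst p) < 1" "dist (snd q) (snd p) < 1"
      using that dist_fst_le[of q p] dist_snd_le[of q p] by (auto simp: dist_commute)
    then show "norm (fst q) \<le> A" "norm (snd q) \<le> B"
      unfolding A_def B_def by (smt (verit) dist_norm norm_triangle_sub)+
  qed
  have "(K * (A + B))-lipschitz_on (ball p 1 \<inter> UNIV) (\<lambda>p. bil (fst p) (snd p))"
  proof (rule lipschitz_onI)
    fix q r assume "q \<in> ball p 1 \<inter> UNIV" "r \<in> ball p 1 \<inter> UNIV"
    then have q: "norm (snd q) \<le> B" and r: "norm (fst r) \<le> A" using bounds by auto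
    have "bil (fst q) (snd q) - bil (fst r) (snd r)
        = bil (fst q - fst r) (snd q) + bil (fst r) (snd q - snd r)"
      by (simp add: bounded_bilinear.diff_left[OF assms] bounded_bilinear.diff_right[OF assms])
    moreover have "norm (bil (fst q - fst r) (snd q) + bil (fst r) (snd q - snd r))
        \<le> norm (fst q - fst r) * norm (snd q) * K + norm (fst r) * norm (snd q - snd r) * K"
      by (rule order_trans[OF norm_triangle_ineq add_mono[OF K(2) K(2)]])
    ultimately have "dist (bil (fst q) (snd q)) (bil (fst r) (snd r))
        \<le> dist (fst q) (fst r) * norm (snd q) * K + norm (fst r) * dist (snd q) (snd r) * K"
      by (simp add: dist_norm)
    also have "\<dots> \<le> dist q r * B * K + A * dist q r * K"
      using q r K dist_fst_le[of q r] dist_snd_le[of q r]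
      by (intro add_mono mult_right_mono mult_mono) (auto simp: A_def)
    finally show "dist (bil (fst q) (snd q)) (bil (fst r) (snd r)) \<le> K * (A + B) * dist q r"
      by (simp add: algebra_simps)
  qed (use K in \<open>simp add: A_def B_def\<close>)
  then show "\<exists>e>0. \<exists>K. K-lipschitz_on (ball p e \<inter> UNIV) (\<lambda>p. bil (fst p) (snd p))"
    using zero_less_one by blast
qed

lemma locally_lipschitz_on_bounded_bilinear:
  assumes "bounded_bilinear bil" and "locally_lipschitz_on S f" and "locally_lipschitz_on S g"
  shows "locally_lipschitz_on S (\<lambda>x. bil (f x) (g x))"
  using locally_lipschitz_on_compose[OF bounded_bilinear_imp_locally_lipschitz_on[OF assms(1)]
      locally_lipschitz_on_Pair[OF assms(2,3)]]
  by simp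

lemma locally_lipschitz_on_add:
  fixes f g :: "'a::metric_space \<Rightarrow> 'b::real_normed_vector"
  shows "locally_lipschitz_on S f \<Longrightarrow> locally_lipschitz_on S g \<Longrightarrow>
    locally_lipschitz_on S (\<lambda>x. f x + g x)"
  using locally_lipschitz_on_bounded_linear[OF bounded_linear_add[OF bounded_linear_fst bounded_linear_snd]
      locally_lipschitz_on_Pair]
  by simp

lemma locally_lipschitz_on_minus:
  fixes f :: "'a::metric_space \<Rightarrow> 'b::real_normed_vector"
  shows "locally_lipschitz_on S f \<Longrightarrow> locally_lipschitz_on S (\<lambda>x. - f x)"
  by (rule locally_lipschitz_on_bounded_linear[OF bounded_linear_minus[OF bounded_linear_ident]])

lemma locally_lipschitz_on_diff:
  fixes f g :: "'a::metric_space \<Rightarrow> 'b::real_normed_vector"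
  shows "locally_lipschitz_on S f \<Longrightarrow> locally_lipschitz_on S g \<Longrightarrow>
    locally_lipschitz_on S (\<lambda>x. f x - g x)"
  using locally_lipschitz_on_bounded_linear[OF bounded_linear_sub[OF bounded_linear_fst bounded_linear_snd]
      locally_lipschitz_on_Pair]
  by simp

lemma locally_lipschitz_on_mult:
  fixes f g :: "'a::metric_space \<Rightarrow> real"
  shows "locally_lipschitz_on S f \<Longrightarrow> locally_lipschitz_on S g \<Longrightarrow>
    locally_lipschitz_on S (\<lambda>x. f x * g x)"
  by (rule locally_lipschitz_on_bounded_bilinear[OF bounded_bilinear_mult])

lemma locally_lipschitz_on_scaleR:
  fixes g :: "'a::metric_space \<Rightarrow> 'b::real_normed_vector"
  shows "locally_lipschitz_on S f \<Longrightarrow> locally_lipschitz_on S g \<Longrightarrow>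
    locally_lipschitz_on S (\<lambda>x. f x *\<^sub>R g x)"
  by (rule locally_lipschitz_on_bounded_bilinear[OF bounded_bilinear_scaleR])

lemma locally_lipschitz_on_norm:
  fixes f :: "'a::metric_space \<Rightarrow> 'b::real_normed_vector"
  shows "locally_lipschitz_on S f \<Longrightarrow> locally_lipschitz_on S (\<lambda>x. norm (f x))"
  by (rule locally_lipschitz_on_compose_lipschitz[of 1 UNIV norm])
    (auto intro!: lipschitz_onI simp: dist_norm norm_triangle_ineq3)

lemma lipschitz_on_inverse_atLeast:
  fixes d :: real
  assumes "d > 0"
  shows "(1 / d^2)-lipschitz_on {d..} inverse"
proof (rule lipschitz_onI)
  fix y z :: real assume "y \<in> {d..}" "z \<in> {d..}"
  then have y: "d \<le> y" and z: "d \<le> z" by auto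
  have "d^2 \<le> y * z" unfolding power2_eq_square using y z assms by (intro mult_mono) auto
  then have "\<bar>y - z\<bar> / (y * z) \<le> \<bar>y - z\<bar> / d^2"
    using assms y z by (intro divide_left_mono) (auto intro!: mult_pos_pos)
  moreover have "dist (inverse y) (inverse z) = \<bar>y - z\<bar> / (y * z)"
    using y z assms by (simp add: dist_real_def field_simps abs_minus_commute)
  ultimately show "dist (inverse y) (inverse z) \<le> 1 / d^2 * dist y z"
    by (simp add: dist_real_def)
qed simp

lemma lipschitz_on_sqrt_atLeast:
  fixes b :: real
  assumes "b > 0"
  shows "(1 / (2 * sqrt b))-lipschitz_on {b..} sqrt"
proof (rule lipschitz_onI)
  fix y z :: real assume "y \<in> {b..}" "z \<in> {b..}"
  then have y: "b \<le> y" and z: "b \<le> z" by auto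
  have "y - z = (sqrt y - sqrt z) * (sqrt y + sqrt z)"
    using y z assms by (simp add: algebra_simps)
  then have "\<bar>y - z\<bar> = \<bar>sqrt y - sqrt z\<bar> * (sqrt y + sqrt z)"
    using y z assms by (simp add: abs_mult)
  moreover have "2 * sqrt b \<le> sqrt y + sqrt z"
    using real_sqrt_le_mono[OF y] real_sqrt_le_mono[OF z] by linarith
  ultimately have "\<bar>sqrt y - sqrt z\<bar> * (2 * sqrt b) \<le> \<bar>y - z\<bar>"
    by (metis abs_ge_zero mult_left_mono)
  then show "dist (sqrt y) (sqrt z) \<le> 1 / (2 * sqrt b) * dist y z"
    using assms by (simp add: dist_real_def field_simps)
qed (use assms in simp)

definition profile :: "real \<Rightarrow> real \<Rightarrow> real \<Rightarrow> real" where
  "profile b c t = sqrt ((t + c)^2 + b)"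

(* [profile_ratio b c t = profile' t / t]: the factor 1/t comes from differentiating the norm. *)
definition profile_ratio :: "real \<Rightarrow> real \<Rightarrow> real \<Rightarrow> real" where
  "profile_ratio b c t = (t + c) / (t * profile b c t)"

definition profile_ratio_deriv :: "real \<Rightarrow> real \<Rightarrow> real \<Rightarrow> real" where
  "profile_ratio_deriv b c t = - (c / profile b c t + t * (t + c)^2 / profile b c t ^ 3) / t^2"

lemma power2_profile: "b > 0 \<Longrightarrow> profile b c t ^ 2 = (t + c)^2 + b"
  unfolding profile_def by (simp add: add_nonneg_nonneg)

lemma profile_ge_sqrt: "b > 0 \<Longrightarrow> sqrt b \<le> profile b c t"
  unfolding profile_def by simp

lemma profile_pos: "b > 0 \<Longrightarrow> profile b c t > 0"
  unfolding profile_def by (simp add: add_nonneg_pos)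

lemma abs_le_profile: "b > 0 \<Longrightarrow> \<bar>t + c\<bar> \<le> profile b c t"
  unfolding profile_def by (simp add: real_le_rsqrt)

lemma profile_has_real_derivative:
  assumes "b > 0"
  shows "(profile b c has_real_derivative (t + c) / profile b c t) (at t)"
proof -
  have inner: "((\<lambda>x. (x + c)^2 + b) has_real_derivative 2 * (t + c)) (at t)"
    by (rule derivative_eq_intros refl)+ simp
  have "0 < (t + c)^2 + b" using assms by (simp add: add_nonneg_pos)
  from DERIV_chain2[OF DERIV_real_sqrt[OF this] inner]
  have "((\<lambda>x. sqrt ((x + c)^2 + b)) has_real_derivative
      inverse (sqrt ((t + c)^2 + b)) / 2 * (2 * (t + c))) (at t)" .
  then show ?thesis
    unfolding profile_def[abs_def] by (rule DERIV_cong) (simp only: divide_inverse mult_ac, simp)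
qed

lemma profile_ratio_has_real_derivative:
  assumes "b > 0" and "t > 0"
  shows "(profile_ratio b c has_real_derivative profile_ratio_deriv b c t) (at t)"
proof -
  let ?s = "profile b c t"
  have s: "?s > 0" using profile_pos[OF assms(1)] .
  have "(profile_ratio b c has_real_derivative
      (1 * (t * ?s) - (t + c) * (1 * ?s + t * ((t + c) / ?s))) / (t * ?s)^2) (at t)"
    unfolding profile_ratio_def
    using assms s by (auto intro!: derivative_eq_intros profile_has_real_derivative simp: power2_eq_square)
  moreover have "(1 * (t * ?s) - (t + c) * (1 * ?s + t * ((t + c) / ?s))) / (t * ?s)^2
      = profile_ratio_deriv b c t"
    using assms s unfolding profile_ratio_deriv_def
    by (simp add: field_simps power2_eq_square power3_eq_cube)
  ultimately show ?thesis by simp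
qed

lemma abs_profile_ratio_le:
  assumes "b > 0" and "t > 0"
  shows "\<bar>profile_ratio b c t\<bar> \<le> 1 / t"
proof -
  have "\<bar>profile_ratio b c t\<bar> = (\<bar>t + c\<bar> / profile b c t) / t"
    using assms profile_pos[OF assms(1), of c t] by (simp add: profile_ratio_def abs_mult)
  also have "\<dots> \<le> 1 / t"
    using assms abs_le_profile[OF assms(1)] profile_pos[OF assms(1)]
    by (intro divide_right_mono) auto
  finally show ?thesis .
qed

lemma abs_profile_ratio_deriv_le:
  assumes "b > 0" and "t > 0"
  shows "\<bar>profile_ratio_deriv b c t\<bar> * t^2 \<le> 1 + 2 * \<bar>c\<bar> / sqrt b"
proof -
  let ?s = "profile b c t"
  have s: "?s > 0" using profile_pos[OF assms(1)] .
  have q: "(t + c)^2 / ?s^2 \<le> 1"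
    using power2_profile[OF assms(1)] add_nonneg_pos[OF zero_le_power2 assms(1), of "t + c"] assms(1)
    by (simp add: divide_le_eq_1)
  have eq: "profile_ratio_deriv b c t * t^2 = - (c / ?s + t / ?s * ((t + c)^2 / ?s^2))"
    using assms s by (simp add: profile_ratio_deriv_def field_simps power2_eq_square power3_eq_cube)
  have "\<bar>profile_ratio_deriv b c t\<bar> * t^2 = \<bar>profile_ratio_deriv b c t * t^2\<bar>"
    by (simp add: abs_mult)
  also have "\<dots> = \<bar>c / ?s + t / ?s * ((t + c)^2 / ?s^2)\<bar>"
    unfolding eq by (rule abs_minus_cancel)
  also have "\<dots> \<le> \<bar>c\<bar> / ?s + t / ?s * ((t + c)^2 / ?s^2)"
    using assms s by (intro order_trans[OF abs_triangle_ineq]) (simp add: abs_mult)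
  also have "\<dots> \<le> \<bar>c\<bar> / ?s + t / ?s"
    using q assms s by (intro add_left_mono mult_left_le) auto
  also have "\<dots> \<le> \<bar>c\<bar> / ?s + (?s + \<bar>c\<bar>) / ?s"
    using abs_le_profile[OF assms(1), of t c] s by (intro add_left_mono divide_right_mono) auto
  also have "\<dots> = 1 + 2 * \<bar>c\<bar> / ?s" using s by (simp add: field_simps)
  also have "\<dots> \<le> 1 + 2 * \<bar>c\<bar> / sqrt b"
    using assms s profile_ge_sqrt[OF assms(1)] by (intro add_left_mono divide_left_mono) auto
  finally show ?thesis .
qed

lemma bounded_bilinear_transpose_mult:
  "bounded_bilinear (\<lambda>(A::real^'n^'m) (B::real^'k^'m). transpose A ** B)"
proof -
  have "bilinear (\<lambda>(A::real^'n^'m) (B::real^'k^'m). transpose A ** B)"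
    unfolding bilinear_def
    by (intro conjI allI linearI)
      (simp_all add: vec_eq_iff matrix_matrix_mult_def transpose_def sum.distrib
        sum_distrib_left algebra_simps)
  then show ?thesis by (rule bilinear_conv_bounded_bilinear[THEN iffD1])
qed

definition orth_defect :: "real^'n^'m \<Rightarrow> real^'n^'n" where
  "orth_defect R = transpose R ** R - mat 1"

definition orth_defect_deriv :: "real^'n^'m \<Rightarrow> real^'n^'m \<Rightarrow> real^'n^'n" where
  "orth_defect_deriv R W = transpose R ** W + transpose W ** R"

lemma bounded_bilinear_orth_defect_deriv: "bounded_bilinear orth_defect_deriv"
proof -
  have "bilinear orth_defect_deriv"
    unfolding bilinear_def orth_defect_deriv_def
    by (intro conjI allI linearI)
      (simp_all add: vec_eq_iff matrix_matrix_mult_def transpose_def sum.distrib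
        sum_distrib_left algebra_simps)
  then show ?thesis by (rule bilinear_conv_bounded_bilinear[THEN iffD1])
qed

interpretation orth_defect_deriv: bounded_bilinear orth_defect_deriv
  by (rule bounded_bilinear_orth_defect_deriv)

lemma has_derivative_orth_defect: "(orth_defect has_derivative orth_defect_deriv R) (at R)"
proof -
  have "((\<lambda>R. transpose R ** R - mat 1) has_derivative
      (\<lambda>W. transpose R ** W + transpose W ** R - 0)) (at R)"
    by (intro has_derivative_diff has_derivative_const
        bounded_bilinear.FDERIV[OF bounded_bilinear_transpose_mult has_derivative_ident has_derivative_ident])
  then show ?thesis by (simp add: orth_defect_def[abs_def] orth_defect_deriv_def[abs_def])
qed

lemma has_derivative_norm_orth_defect:
  assumes "orth_defect R \<noteq> 0"
  shows "((\<lambda>R. norm (orth_defect R)) has_derivative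
    (\<lambda>W. (orth_defect R \<bullet> orth_defect_deriv R W) / norm (orth_defect R))) (at R)"
  using has_derivative_compose[OF has_derivative_orth_defect has_derivative_norm[OF assms]]
  by (simp add: sgn_div_norm inner_commute divide_inverse_commute)

lemma open_orth_defect_gt: "open {R. d < norm (orth_defect R)}"
proof -
  have "continuous_on UNIV orth_defect"
    using has_derivative_orth_defect has_derivative_continuous continuous_at_imp_continuous_on
    by blast
  then show ?thesis by (intro open_Collect_less continuous_on_const continuous_on_norm)
qed

lemma norm_sq_le_orth_defect:
  fixes R :: "real^'n^'m"
  defines "m \<equiv> norm (mat 1 :: real^'n^'n)"
  shows "norm R ^ 2 \<le> m * (norm (orth_defect R) + m)"
proof -
  have trace: "A \<bullet> (mat 1 :: real^'n^'n) = (\<Sum>i\<in>UNIV. A$i$i)" for A :: "real^'n^'n"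
    unfolding inner_vec_def mat_def inner_real_def
    by (simp add: if_distrib[of "\<lambda>x. _ * x"] cong: if_cong)
  have "norm R ^ 2 = (\<Sum>k\<in>UNIV. \<Sum>i\<in>UNIV. R$k$i * R$k$i)"
    by (simp add: power2_norm_eq_inner inner_vec_def inner_real_def)
  also have "\<dots> = (transpose R ** R) \<bullet> mat 1"
    unfolding trace by (subst sum.swap) (simp add: matrix_matrix_mult_def transpose_def)
  also have "\<dots> = orth_defect R \<bullet> mat 1 + mat 1 \<bullet> (mat 1 :: real^'n^'n)"
    by (simp add: orth_defect_def inner_diff_left)
  also have "\<dots> \<le> norm (orth_defect R) * m + m^2"
    using norm_cauchy_schwarz[of "orth_defect R" "mat 1"]
    by (simp add: m_def power2_norm_eq_inner)
  finally show ?thesis by (simp add: algebra_simps power2_eq_square)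
qed

definition defect_pairing :: "real^'n^'n \<Rightarrow> real^'n^'m \<Rightarrow> ((real^'n^'m) \<Rightarrow>\<^sub>L real)" where
  "defect_pairing X Y = Blinfun (\<lambda>W. X \<bullet> orth_defect_deriv Y W)"

lemma blinfun_apply_defect_pairing [simp]:
  "blinfun_apply (defect_pairing X Y) W = X \<bullet> orth_defect_deriv Y W"
proof -
  have "bounded_linear (\<lambda>W. X \<bullet> orth_defect_deriv Y W)"
    by (intro bounded_linear_compose[OF bounded_linear_inner_right orth_defect_deriv.bounded_linear_right])
  then show ?thesis by (simp add: defect_pairing_def bounded_linear_Blinfun_apply)
qed

lemma bounded_bilinear_defect_pairing: "bounded_bilinear defect_pairing"
proof -
  have "bilinear defect_pairing"
    unfolding bilinear_def
    by (auto intro!: linearI blinfun_eqI simp: orth_defect_deriv.add_left orth_defect_deriv.scaleR_left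
        inner_add_left inner_add_right plus_blinfun.rep_eq scaleR_blinfun.rep_eq)
  then show ?thesis by (rule bilinear_conv_bounded_bilinear[THEN iffD1])
qed

interpretation defect_pairing: bounded_bilinear defect_pairing
  by (rule bounded_bilinear_defect_pairing)

definition penalty :: "real \<Rightarrow> real \<Rightarrow> real^'n^'m \<Rightarrow> real" where
  "penalty b c R = profile b c (norm (orth_defect R))"

definition penalty_grad :: "real \<Rightarrow> real \<Rightarrow> real^'n^'m \<Rightarrow> ((real^'n^'m) \<Rightarrow>\<^sub>L real)" where
  "penalty_grad b c R =
    profile_ratio b c (norm (orth_defect R)) *\<^sub>R defect_pairing (orth_defect R) R"

definition penalty_hess ::
    "real \<Rightarrow> real \<Rightarrow> real^'n^'m \<Rightarrow> ((real^'n^'m) \<Rightarrow>\<^sub>L (real^'n^'m) \<Rightarrow>\<^sub>L real)" where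
  "penalty_hess b c R =
    (profile_ratio_deriv b c (norm (orth_defect R)) / norm (orth_defect R)) *\<^sub>R
      (blinfun_scaleR_left (defect_pairing (orth_defect R) R) o\<^sub>L defect_pairing (orth_defect R) R)
    + profile_ratio b c (norm (orth_defect R)) *\<^sub>R
      (defect_pairing.prod_right (orth_defect R)
        + (defect_pairing.prod_left R o\<^sub>L orth_defect_deriv.prod_right R))"

lemma penalty_hess_apply:
  "blinfun_apply (blinfun_apply (penalty_hess b c R) V) W =
    profile_ratio_deriv b c (norm (orth_defect R)) / norm (orth_defect R)
      * (orth_defect R \<bullet> orth_defect_deriv R V) * (orth_defect R \<bullet> orth_defect_deriv R W)
    + profile_ratio b c (norm (orth_defect R))
      * (orth_defect R \<bullet> orth_defect_deriv V W + orth_defect_deriv R V \<bullet> orth_defect_deriv R W)"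
  by (simp add: penalty_hess_def plus_blinfun.rep_eq scaleR_blinfun.rep_eq blinfun_scaleR_left.rep_eq)

lemma has_derivative_penalty:
  assumes "b > 0" and "orth_defect R \<noteq> 0"
  shows "(penalty b c has_derivative blinfun_apply (penalty_grad b c R)) (at R)"
proof -
  let ?n = "norm (orth_defect R)"
  have "(penalty b c has_derivative
      (\<lambda>W. (?n + c) / profile b c ?n * ((orth_defect R \<bullet> orth_defect_deriv R W) / ?n))) (at R)"
    unfolding penalty_def[abs_def]
    by (rule has_derivative_compose[OF has_derivative_norm_orth_defect[OF assms(2)]
          profile_has_real_derivative[OF assms(1), unfolded has_field_derivative_def]])
  then show ?thesis
    by (simp add: penalty_grad_def scaleR_blinfun.rep_eq profile_ratio_def mult.commute)
qed

lemma has_derivative_penalty_grad: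
  assumes "b > 0" and "orth_defect R \<noteq> 0"
  shows "(penalty_grad b c has_derivative blinfun_apply (penalty_hess b c R)) (at R)"
proof -
  let ?n = "norm (orth_defect R)"
  have "?n > 0" using assms(2) by simp
  have ratio: "((\<lambda>R. profile_ratio b c (norm (orth_defect R))) has_derivative
      (\<lambda>W. profile_ratio_deriv b c ?n * ((orth_defect R \<bullet> orth_defect_deriv R W) / ?n))) (at R)"
    by (rule has_derivative_compose[OF has_derivative_norm_orth_defect[OF assms(2)]
          profile_ratio_has_real_derivative[OF assms(1) \<open>?n > 0\<close>, unfolded has_field_derivative_def]])
  have pairing: "((\<lambda>R. defect_pairing (orth_defect R) R) has_derivative
      (\<lambda>V. defect_pairing (orth_defect R) V + defect_pairing (orth_defect_deriv R V) R)) (at R)"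
    by (rule defect_pairing.FDERIV[OF has_derivative_orth_defect has_derivative_ident])
  show ?thesis
    using has_derivative_scaleR[OF ratio pairing] unfolding penalty_grad_def[abs_def]
    by (rule has_derivative_eq_rhs)
      (auto intro!: blinfun_eqI simp: penalty_hess_def plus_blinfun.rep_eq scaleR_blinfun.rep_eq
        blinfun_scaleR_left.rep_eq algebra_simps)
qed

lemma locally_lipschitz_on_profile_ratio:
  assumes b: "b > 0" and d: "d > 0"
    and f: "locally_lipschitz_on S f" and f_ge: "\<And>x. x \<in> S \<Longrightarrow> d \<le> f x"
  shows "locally_lipschitz_on S (\<lambda>x. profile_ratio b c (f x))"
    and "locally_lipschitz_on S (\<lambda>x. profile_ratio_deriv b c (f x) / f x)"
proof -
  have inv_f: "locally_lipschitz_on S (\<lambda>x. inverse (f x))"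
    by (rule locally_lipschitz_on_compose_lipschitz[OF lipschitz_on_inverse_atLeast[OF d] f])
      (simp add: f_ge)
  have "locally_lipschitz_on S (\<lambda>x. sqrt ((f x + c) * (f x + c) + b))"
    by (rule locally_lipschitz_on_compose_lipschitz[OF lipschitz_on_sqrt_atLeast[OF b]])
      (auto intro!: locally_lipschitz_on_add locally_lipschitz_on_mult f locally_lipschitz_on_const)
  then have profile: "locally_lipschitz_on S (\<lambda>x. profile b c (f x))"
    by (simp add: profile_def power2_eq_square)
  have inv_profile: "locally_lipschitz_on S (\<lambda>x. inverse (profile b c (f x)))"
    by (rule locally_lipschitz_on_compose_lipschitz[OF lipschitz_on_inverse_atLeast[of "sqrt b"] profile])
      (use b in \<open>simp_all add: profile_ge_sqrt\<close>)
  have "locally_lipschitz_on S (\<lambda>x. (f x + c) * inverse (f x) * inverse (profile b c (f x)))"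
    by (intro locally_lipschitz_on_mult locally_lipschitz_on_add f locally_lipschitz_on_const
        inv_f inv_profile)
  then show "locally_lipschitz_on S (\<lambda>x. profile_ratio b c (f x))"
    by (simp add: profile_ratio_def field_simps)
  have "locally_lipschitz_on S (\<lambda>x. - (c * inverse (profile b c (f x))
      + f x * ((f x + c) * (f x + c)) * (inverse (profile b c (f x)) * inverse (profile b c (f x))
        * inverse (profile b c (f x))))
      * (inverse (f x) * inverse (f x) * inverse (f x)))"
    by (intro locally_lipschitz_on_mult locally_lipschitz_on_add locally_lipschitz_on_minus
        locally_lipschitz_on_const f inv_f inv_profile)
  then show "locally_lipschitz_on S (\<lambda>x. profile_ratio_deriv b c (f x) / f x)"
    by (simp add: profile_ratio_deriv_def divide_inverse power2_eq_square power3_eq_cube mult.assoc)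
qed

lemma locally_lipschitz_on_orth_defect: "locally_lipschitz_on S orth_defect"
proof -
  have "locally_lipschitz_on S (\<lambda>R. transpose R ** R - mat 1)"
    by (intro locally_lipschitz_on_diff locally_lipschitz_on_const locally_lipschitz_on_ident
        locally_lipschitz_on_bounded_bilinear[OF bounded_bilinear_transpose_mult])
  then show ?thesis by (simp add: orth_defect_def[abs_def])
qed

lemma locally_lipschitz_on_penalty_hess:
  assumes "b > 0" and "d > 0"
  shows "locally_lipschitz_on {R. d < norm (orth_defect R)} (penalty_hess b c)"
proof -
  let ?U = "{R. d < norm (orth_defect R)}"
  have norm: "locally_lipschitz_on ?U (\<lambda>R. norm (orth_defect R))"
    by (intro locally_lipschitz_on_norm locally_lipschitz_on_orth_defect)
  have "d \<le> norm (orth_defect R)" if "R \<in> ?U" for R using that by simp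
  note ratios = locally_lipschitz_on_profile_ratio[OF assms norm this]
  have pairing: "locally_lipschitz_on ?U (\<lambda>R. defect_pairing (orth_defect R) R)"
    by (intro locally_lipschitz_on_bounded_bilinear[OF bounded_bilinear_defect_pairing]
        locally_lipschitz_on_orth_defect locally_lipschitz_on_ident)
  show ?thesis
    unfolding penalty_hess_def[abs_def]
    by (intro locally_lipschitz_on_add locally_lipschitz_on_scaleR ratios pairing
        locally_lipschitz_on_bounded_bilinear[OF bounded_bilinear_blinfun_compose]
        locally_lipschitz_on_bounded_linear[OF bounded_linear_blinfun_scaleR_left]
        locally_lipschitz_on_bounded_linear[OF defect_pairing.bounded_linear_prod_right]
        locally_lipschitz_on_bounded_linear[OF defect_pairing.bounded_linear_prod_left]
        locally_lipschitz_on_bounded_linear[OF orth_defect_deriv.bounded_linear_prod_right]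
        locally_lipschitz_on_orth_defect locally_lipschitz_on_ident)
qed

lemma penalty_hess_quadratic_bound:
  assumes b: "b > 0" and d: "d > 0"
  obtains L where "\<And>(R :: real^'n^'m) V. d < norm (orth_defect R) \<Longrightarrow>
    - L * norm V ^ 2 \<le> blinfun_apply (blinfun_apply (penalty_hess b c R) V) V \<and>
    blinfun_apply (blinfun_apply (penalty_hess b c R) V) V \<le> L * norm V ^ 2"
proof -
  obtain K where K: "K > 0"
    "\<And>A B :: real^'n^'m. norm (orth_defect_deriv A B) \<le> norm A * norm B * K"
    using orth_defect_deriv.pos_bounded by blast
  define m where "m = norm (mat 1 :: real^'n^'n)"
  define C where "C = 1 + 2 * \<bar>c\<bar> / sqrt b"
  define L where "L = (C + 1) * (K^2 * (m + m^2 / d)) + K"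
  have "- L * norm V ^ 2 \<le> blinfun_apply (blinfun_apply (penalty_hess b c R) V) V \<and>
      blinfun_apply (blinfun_apply (penalty_hess b c R) V) V \<le> L * norm V ^ 2"
    if R: "d < norm (orth_defect R)" for R :: "real^'n^'m" and V
  proof -
    define n where "n = norm (orth_defect R)"
    define g where "g = norm (orth_defect_deriv R V)"
    have n: "n > 0" and dn: "d < n" using R d by (auto simp: n_def)
    have m: "m \<ge> 0" by (simp add: m_def)
    have g_sq: "g^2 / n \<le> K^2 * (m + m^2 / d) * norm V ^ 2"
    proof -
      have "g^2 \<le> (norm R * norm V * K)^2"
        unfolding g_def by (rule power_mono[OF K(2)]) simp
      also have "\<dots> = K^2 * norm V ^ 2 * norm R ^ 2" by (simp add: power_mult_distrib)
      also have "\<dots> \<le> K^2 * norm V ^ 2 * (m * (n + m))"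
        using norm_sq_le_orth_defect[of R] by (intro mult_left_mono) (simp_all add: m_def n_def)
      also have "\<dots> = K^2 * (m * (n + m)) * norm V ^ 2" by simp
      finally have "g^2 / n \<le> K^2 * (m + m^2 / n) * norm V ^ 2"
        using n by (simp add: field_simps power2_eq_square)
      also have "\<dots> \<le> K^2 * (m + m^2 / d) * norm V ^ 2"
        using n d dn by (intro mult_right_mono mult_left_mono add_left_mono divide_left_mono) auto
      finally show ?thesis .
    qed
    have first: "\<bar>profile_ratio_deriv b c n / n * (orth_defect R \<bullet> orth_defect_deriv R V)^2\<bar>
        \<le> C * (g^2 / n)"
    proof -
      have "\<bar>orth_defect R \<bullet> orth_defect_deriv R V\<bar>^2 \<le> (n * g)^2"
        unfolding n_def g_def by (rule power_mono[OF Cauchy_Schwarz_ineq2]) simp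
      then have sq: "(orth_defect R \<bullet> orth_defect_deriv R V)^2 \<le> (n * g)^2" by simp
      have "\<bar>profile_ratio_deriv b c n / n * (orth_defect R \<bullet> orth_defect_deriv R V)^2\<bar>
          = \<bar>profile_ratio_deriv b c n\<bar> * (orth_defect R \<bullet> orth_defect_deriv R V)^2 / n"
        using n by (simp add: abs_mult)
      also have "\<dots> \<le> \<bar>profile_ratio_deriv b c n\<bar> * (n * g)^2 / n"
        using sq n by (intro divide_right_mono mult_left_mono) auto
      also have "\<dots> = (\<bar>profile_ratio_deriv b c n\<bar> * n^2) * (g^2 / n)"
        using n by (simp add: field_simps power2_eq_square)
      also have "\<dots> \<le> C * (g^2 / n)"
        using abs_profile_ratio_deriv_le[OF b n] n by (intro mult_right_mono) (auto simp: C_def)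
      finally show ?thesis .
    qed
    have second: "\<bar>profile_ratio b c n * (orth_defect R \<bullet> orth_defect_deriv V V + g^2)\<bar>
        \<le> K * norm V ^ 2 + g^2 / n"
    proof -
      have "\<bar>orth_defect R \<bullet> orth_defect_deriv V V\<bar> \<le> n * (norm V * norm V * K)"
        using Cauchy_Schwarz_ineq2[of "orth_defect R" "orth_defect_deriv V V"] K(2)[of V V] n
        by (simp add: n_def order_trans mult_left_mono)
      moreover have "\<bar>g^2\<bar> = g^2" by simp
      ultimately have sum: "\<bar>orth_defect R \<bullet> orth_defect_deriv V V + g^2\<bar>
          \<le> n * (norm V * norm V * K) + g^2"
        using abs_triangle_ineq[of _ "g^2"] by linarith
      have "\<bar>profile_ratio b c n * (orth_defect R \<bullet> orth_defect_deriv V V + g^2)\<bar>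
          \<le> 1 / n * (n * (norm V * norm V * K) + g^2)"
        unfolding abs_mult using n by (intro mult_mono abs_profile_ratio_le[OF b n] sum) auto
      also have "\<dots> = K * norm V ^ 2 + g^2 / n" using n by (simp add: field_simps power2_eq_square)
      finally show ?thesis .
    qed
    have "blinfun_apply (blinfun_apply (penalty_hess b c R) V) V
        = profile_ratio_deriv b c n / n * (orth_defect R \<bullet> orth_defect_deriv R V)^2
          + profile_ratio b c n * (orth_defect R \<bullet> orth_defect_deriv V V + g^2)"
      by (simp add: penalty_hess_apply n_def g_def dot_square_norm power2_eq_square mult.assoc)
    then have "\<bar>blinfun_apply (blinfun_apply (penalty_hess b c R) V) V\<bar>
        \<le> C * (g^2 / n) + (K * norm V ^ 2 + g^2 / n)"
      using first second abs_triangle_ineq by (smt (verit))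
    also have "\<dots> = (C + 1) * (g^2 / n) + K * norm V ^ 2" by (simp add: algebra_simps add_divide_distrib)
    also have "\<dots> \<le> (C + 1) * (K^2 * (m + m^2 / d) * norm V ^ 2) + K * norm V ^ 2"
      using g_sq b by (intro add_right_mono mult_left_mono) (auto simp: C_def)
    also have "\<dots> = L * norm V ^ 2" by (simp add: L_def algebra_simps)
    finally show ?thesis unfolding abs_le_iff by linarith
  qed
  then show thesis by (rule that)
qed

lemma P5_eq_penalty: "P5 b c = penalty b c"
  by (simp add: fun_eq_iff P5_def penalty_def profile_def orth_defect_def)

lemma U_set_eq: "U_set d = {R. d < norm (orth_defect R)}"
  by (simp add: U_set_def orth_defect_def)

theorem lemma11:
  fixes b c d :: real
  assumes "b > 0" and "d > 0"
  shows "open (U_set d) \<and>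
    (\<exists>(D1 :: real^3^3 \<Rightarrow> ((real^3^3) \<Rightarrow>\<^sub>L real))
       (D2 :: real^3^3 \<Rightarrow> ((real^3^3) \<Rightarrow>\<^sub>L ((real^3^3) \<Rightarrow>\<^sub>L real))).
       (\<forall>R \<in> U_set d. (P5 b c has_derivative blinfun_apply (D1 R)) (at R)) \<and>
       (\<forall>R \<in> U_set d. (D1 has_derivative blinfun_apply (D2 R)) (at R)) \<and>
       (\<forall>R \<in> U_set d. \<exists>e > 0. \<exists>K. K-lipschitz_on (ball R e \<inter> U_set d) D2) \<and>
       (\<exists>L. \<forall>R \<in> U_set d. \<forall>v :: real^3^3.
          - L * norm v ^ 2 \<le> blinfun_apply (blinfun_apply (D2 R) v) v \<and>
          blinfun_apply (blinfun_apply (D2 R) v) v \<le> L * norm v ^ 2))"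
proof -
  have nonzero: "orth_defect R \<noteq> 0" if "R \<in> U_set d" for R
    using that assms(2) by (auto simp: U_set_eq)
  obtain L where L: "\<And>(R :: real^3^3) V. d < norm (orth_defect R) \<Longrightarrow>
      - L * norm V ^ 2 \<le> blinfun_apply (blinfun_apply (penalty_hess b c R) V) V \<and>
      blinfun_apply (blinfun_apply (penalty_hess b c R) V) V \<le> L * norm V ^ 2"
    using penalty_hess_quadratic_bound[OF assms, where c = c] by blast
  show ?thesis
  proof (intro conjI exI[of _ "penalty_grad b c"] exI[of _ "penalty_hess b c"] exI[of _ L])
    show "open (U_set d)"
      unfolding U_set_eq by (rule open_orth_defect_gt)
    show "\<forall>R \<in> U_set d. (P5 b c has_derivative blinfun_apply (penalty_grad b c R)) (at R)"
      using has_derivative_penalty[OF assms(1) nonzero] by (simp add: P5_eq_penalty)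
    show "\<forall>R \<in> U_set d.
        (penalty_grad b c has_derivative blinfun_apply (penalty_hess b c R)) (at R)"
      using has_derivative_penalty_grad[OF assms(1) nonzero] by blast
    show "\<forall>R \<in> U_set d. \<exists>e > 0. \<exists>K. K-lipschitz_on (ball R e \<inter> U_set d) (penalty_hess b c)"
      using locally_lipschitz_on_penalty_hess[OF assms]
      unfolding locally_lipschitz_on_def U_set_eq .
    show "\<forall>R \<in> U_set d. \<forall>v.
        - L * norm v ^ 2 \<le> blinfun_apply (blinfun_apply (penalty_hess b c R) v) v \<and>
        blinfun_apply (blinfun_apply (penalty_hess b c R) v) v \<le> L * norm v ^ 2"
      using L by (simp add: U_set_eq)
  qed
qed

end
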